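(* There is an absolute constant $C>0$ such that for every $n\ge 2$ and all integers $b_1,\dots,b_n\ge 0$ with $b_1+\dots+b_n=n-1$, every equilibrium graph of $(b_1,\dots,b_n)$-BG in the SUM version has diameter at most $C\log n$.
   Context: Bounded budget network creation game $(b_1,\dots,b_n)$-BG: $n$ players with integer budgets $0\le b_i\le n-1$. A strategy of player $i$ is a set $S_i\subseteq\{1,\dots,n\}\setminus\{i\}$ with $|S_i|=b_i$; a profile is realized by the directed graph $G$ on $u_1,\dots,u_n$ with an arc $\overrightarrow{u_iu_j}$ iff $j\in S_i$. $U(G)$ is the undirected multigraph obtained by ignoring directions; $\operatorname{dist}(u,v)$ is the distance in $U(G)$, defined as $n^2$ between different components. SUM cost: $c_{SUM}(u)=\sum_v\operatorname{dist}(u,v)$. An equilibrium graph in the SUM version is a realization in which no vertex can decrease its SUM cost by changing its own strategy while the other strategies are fixed. The diameter is the maximum distance between two vertices. Logarithms are base 2. *)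

theory Defs
  imports Complex_Main
begin

text \<open>Players are 0,...,n-1; a strategy profile is S :: nat => nat set,
  where S i is the set of heads of the arcs bought by player i.\<close>

definition valid_profile :: "nat \<Rightarrow> (nat \<Rightarrow> nat) \<Rightarrow> (nat \<Rightarrow> nat set) \<Rightarrow> bool" where
  "valid_profile n b S \<longleftrightarrow>
     (\<forall>i<n. S i \<subseteq> {..<n} - {i} \<and> card (S i) = b i)"

definition adj :: "(nat \<Rightarrow> nat set) \<Rightarrow> nat \<Rightarrow> nat \<Rightarrow> bool" where
  "adj S u v \<longleftrightarrow> v \<in> S u \<or> u \<in> S v"

definition walk :: "nat \<Rightarrow> (nat \<Rightarrow> nat set) \<Rightarrow> nat \<Rightarrow> nat \<Rightarrow> nat \<Rightarrow> bool" where
  "walk n S u v k \<longleftrightarrow>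
     (\<exists>p :: nat \<Rightarrow> nat. p 0 = u \<and> p k = v \<and> (\<forall>i\<le>k. p i < n)
        \<and> (\<forall>i<k. adj S (p i) (p (Suc i))))"

definition gdist :: "nat \<Rightarrow> (nat \<Rightarrow> nat set) \<Rightarrow> nat \<Rightarrow> nat \<Rightarrow> nat" where
  "gdist n S u v = (if \<exists>k. walk n S u v k then (LEAST k. walk n S u v k) else n^2)"

definition sum_cost :: "nat \<Rightarrow> (nat \<Rightarrow> nat set) \<Rightarrow> nat \<Rightarrow> nat" where
  "sum_cost n S u = (\<Sum>v<n. gdist n S u v)"

definition sum_equilibrium :: "nat \<Rightarrow> (nat \<Rightarrow> nat) \<Rightarrow> (nat \<Rightarrow> nat set) \<Rightarrow> bool" where
  "sum_equilibrium n b S \<longleftrightarrow> valid_profile n b S \<and>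
     (\<forall>i<n. \<forall>T. T \<subseteq> {..<n} - {i} \<and> card T = b i \<longrightarrow>
        sum_cost n S i \<le> sum_cost n (S(i := T)) i)"

definition diameter :: "nat \<Rightarrow> (nat \<Rightarrow> nat set) \<Rightarrow> nat" where
  "diameter n S = Max {gdist n S u v | u v. u < n \<and> v < n}"

end

theory Submission
  imports Defs
begin

text \<open>Since the budgets sum to \<open>n - 1\<close>, an equilibrium graph is a tree. It is connected:
  otherwise a breadth-first spanning forest misses some arc, and redirecting that arc into another
  component saves its owner \<open>n\<^sup>2 - 1\<close> on one vertex while costing at most \<open>n - 2\<close> on each other
  one. Every arc is a bridge: otherwise deleting it leaves a connected graph with \<open>n - 2\<close> arcs.

  For an edge \<open>xy\<close> bought by \<open>x\<close>, replacing it by \<open>xw\<close> for \<open>w\<close> in the component \<open>B\<close> of \<open>y\<close>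
  shows that \<open>y\<close> minimises the sum of distances to \<open>B\<close> over \<open>w \<in> B\<close>. Along a shortest path
  \<open>x\<^sub>0, \<dots>, x\<^sub>D\<close> these components are nested, and whenever \<open>x\<^sub>i\<close> bought the arc to
  \<open>x\<^sub>i\<^sub>+\<^sub>1\<close> the next one has at most half the size, for otherwise \<open>x\<^sub>i\<^sub>+\<^sub>2\<close> would beat
  \<open>x\<^sub>i\<^sub>+\<^sub>1\<close>. Hence at most
  \<open>log n\<close> arcs of the path point forwards and, by symmetry, at most \<open>log n\<close> backwards, so
  \<open>D \<le> 2 log n + 2 \<le> 4 log n\<close>.\<close>

definition is_walk :: "nat \<Rightarrow> (nat \<Rightarrow> nat set) \<Rightarrow> (nat \<Rightarrow> nat) \<Rightarrow> nat \<Rightarrow> bool" where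
  "is_walk n S p k \<longleftrightarrow> (\<forall>i\<le>k. p i < n) \<and> (\<forall>i<k. adj S (p i) (p (Suc i)))"

definition reachable :: "nat \<Rightarrow> (nat \<Rightarrow> nat set) \<Rightarrow> nat \<Rightarrow> nat \<Rightarrow> bool" where
  "reachable n S u v \<longleftrightarrow> (\<exists>k. walk n S u v k)"

abbreviation del_arc :: "(nat \<Rightarrow> nat set) \<Rightarrow> nat \<Rightarrow> nat \<Rightarrow> nat \<Rightarrow> nat set" where
  "del_arc S x y \<equiv> S(x := S x - {y})"

lemma walk_iff_is_walk: "walk n S u v k \<longleftrightarrow> (\<exists>p. p 0 = u \<and> p k = v \<and> is_walk n S p k)"
  unfolding walk_def is_walk_def by auto

lemma adj_sym: "adj S u v \<Longrightarrow> adj S v u"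
  unfolding adj_def by auto

lemma adj_fun_upd:
  assumes "adj S a b" "\<not> (a = x \<and> b = y)" "\<not> (a = y \<and> b = x)" "S x - {y} \<subseteq> T"
  shows "adj (S(x := T)) a b"
  using assms unfolding adj_def by auto

lemma adj_del_arc_mono: "adj (del_arc S x y) a b \<Longrightarrow> S x - {y} \<subseteq> T \<Longrightarrow> adj (S(x := T)) a b"
  unfolding adj_def by (auto split: if_splits)

lemma walk_refl: "u < n \<Longrightarrow> walk n S u u 0"
  unfolding walk_def by (rule exI[of _ "\<lambda>_. u"]) auto

lemma walk_adj: "u < n \<Longrightarrow> v < n \<Longrightarrow> adj S u v \<Longrightarrow> walk n S u v 1"
  unfolding walk_def
  by (rule exI[of _ "\<lambda>i. if i = 0 then u else v"]) (auto simp: less_Suc_eq_le)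

lemma walk_less: "walk n S u v k \<Longrightarrow> u < n \<and> v < n"
  unfolding walk_def by force

lemma walk_trans:
  assumes "walk n S u v k" "walk n S v w l"
  shows "walk n S u w (k + l)"
proof -
  from assms obtain p q where p: "p 0 = u" "p k = v" "is_walk n S p k"
    and q: "q 0 = v" "q l = w" "is_walk n S q l"
    unfolding walk_iff_is_walk by blast
  define r where "r i = (if i \<le> k then p i else q (i - k))" for i
  have "adj S (r i) (r (Suc i))" if "i < k + l" for i
  proof (cases "i < k")
    case True then show ?thesis using p by (simp add: r_def is_walk_def)
  next
    case False
    then have "i - k < l" "Suc i - k = Suc (i - k)" using that by auto
    then show ?thesis using q False p(2) by (auto simp: r_def is_walk_def)
  qed
  moreover have "r i < n" if "i \<le> k + l" for i
    using p q that by (auto simp: r_def is_walk_def)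
  moreover have "r 0 = u" "r (k + l) = w" using p q by (auto simp: r_def)
  ultimately show ?thesis unfolding walk_iff_is_walk is_walk_def by blast
qed

lemma is_walk_rev: "is_walk n S p k \<Longrightarrow> is_walk n S (\<lambda>i. p (k - i)) k"
  unfolding is_walk_def
proof (intro conjI allI impI)
  fix i assume h: "(\<forall>i\<le>k. p i < n) \<and> (\<forall>i<k. adj S (p i) (p (Suc i)))" "i < k"
  then have "adj S (p (k - Suc i)) (p (Suc (k - Suc i)))" by auto
  moreover have "Suc (k - Suc i) = k - i" using h by auto
  ultimately show "adj S (p (k - i)) (p (k - Suc i))" using adj_sym by metis
qed auto

lemma is_walk_fun_upd_avoid:
  assumes "is_walk n S p k" "\<forall>i\<le>k. p i \<noteq> m" "m = x \<or> m = y" "S x - {y} \<subseteq> T"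
  shows "is_walk n (S(x := T)) p k"
  unfolding is_walk_def
proof (intro conjI allI impI)
  fix i assume "i \<le> k" then show "p i < n" using assms(1) unfolding is_walk_def by auto
next
  fix i assume i: "i < k"
  have "adj S (p i) (p (Suc i))" using assms(1) i unfolding is_walk_def by auto
  moreover have "p i \<noteq> m" "p (Suc i) \<noteq> m" using assms(2) i by auto
  ultimately show "adj (S(x := T)) (p i) (p (Suc i))"
    using adj_fun_upd assms(3,4) by blast
qed

lemma walk_rev: "walk n S u v k \<Longrightarrow> walk n S v u k"
proof -
  assume "walk n S u v k"
  then obtain p where "p 0 = u" "p k = v" "is_walk n S p k" unfolding walk_iff_is_walk by blast
  then show ?thesis unfolding walk_iff_is_walk by (intro exI[of _ "\<lambda>i. p (k - i)"]) (simp add: is_walk_rev)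
qed

lemma walk_subwalk:
  assumes "is_walk n S p k" "i \<le> j" "j \<le> k"
  shows "walk n S (p i) (p j) (j - i)"
  unfolding walk_def using assms unfolding is_walk_def
  by (intro exI[of _ "\<lambda>m. p (m + i)"]) auto

lemma reachable_refl: "u < n \<Longrightarrow> reachable n S u u"
  using walk_refl reachable_def by blast

lemma reachable_sym: "reachable n S u v \<Longrightarrow> reachable n S v u"
  using walk_rev reachable_def by blast

lemma reachable_trans: "reachable n S u v \<Longrightarrow> reachable n S v w \<Longrightarrow> reachable n S u w"
  unfolding reachable_def using walk_trans by blast

lemma reachable_adj: "u < n \<Longrightarrow> v < n \<Longrightarrow> adj S u v \<Longrightarrow> reachable n S u v"
  using walk_adj reachable_def by blast

lemma reachable_less: "reachable n S u v \<Longrightarrow> u < n \<and> v < n"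
  using walk_less reachable_def by blast

lemma reachable_if_adj_reachable:
  assumes adj_reach: "\<And>a b. a < n \<Longrightarrow> b < n \<Longrightarrow> adj S a b \<Longrightarrow> reachable n S' a b"
    and "reachable n S u v"
  shows "reachable n S' u v"
proof -
  obtain k p where p: "p 0 = u" "p k = v" "is_walk n S p k"
    using assms(2) unfolding reachable_def walk_iff_is_walk by blast
  have "reachable n S' u (p m)" if "m \<le> k" for m
    using that
  proof (induction m)
    case 0 then show ?case using p reachable_refl unfolding is_walk_def by auto
  next
    case (Suc m)
    then have "reachable n S' (p m) (p (Suc m))" using adj_reach p(3) unfolding is_walk_def by auto
    then show ?case using Suc reachable_trans by auto
  qed
  then show ?thesis using p by auto
qed

lemma gdist_le_walk: "walk n S u v k \<Longrightarrow> gdist n S u v \<le> k"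
  unfolding gdist_def by (auto intro: Least_le)

lemma walk_gdist: "reachable n S u v \<Longrightarrow> walk n S u v (gdist n S u v)"
  unfolding gdist_def reachable_def by (auto intro: LeastI_ex)

lemma gdist_unreachable: "\<not> reachable n S u v \<Longrightarrow> gdist n S u v = n\<^sup>2"
  unfolding gdist_def reachable_def by auto

lemma gdist_sym: "gdist n S u v = gdist n S v u"
proof (cases "reachable n S u v")
  case True
  then have "reachable n S v u" by (rule reachable_sym)
  then show ?thesis using True walk_gdist walk_rev gdist_le_walk by (metis le_antisym)
next
  case False
  then show ?thesis using reachable_sym gdist_unreachable by metis
qed

lemma gdist_self: "u < n \<Longrightarrow> gdist n S u u = 0"
  using gdist_le_walk[OF walk_refl] by force

lemma gdist_eq_0D: "reachable n S u v \<Longrightarrow> gdist n S u v = 0 \<Longrightarrow> u = v"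
  using walk_gdist unfolding walk_def by force

lemma gdist_triangle:
  "reachable n S u v \<Longrightarrow> reachable n S v w \<Longrightarrow> gdist n S u w \<le> gdist n S u v + gdist n S v w"
  using gdist_le_walk walk_trans walk_gdist by blast

lemma gdist_adj: "u < n \<Longrightarrow> v < n \<Longrightarrow> adj S u v \<Longrightarrow> gdist n S u v \<le> 1"
  using gdist_le_walk walk_adj by blast

text \<open>A shortest walk visits no vertex twice, so it has at most \<open>n - 1\<close> steps.\<close>

lemma gdist_le_card:
  assumes "reachable n S u v" shows "gdist n S u v \<le> n - 1"
proof (rule ccontr)
  define k where "k = gdist n S u v"
  assume "\<not> gdist n S u v \<le> n - 1"
  then have "card (p ` {..k}) < card {..k}" if "is_walk n S p k" for p
    using that card_mono[of "{..<n}" "p ` {..k}"] unfolding k_def is_walk_def by fastforce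
  moreover obtain p where p: "p 0 = u" "p k = v" "is_walk n S p k"
    using walk_gdist[OF assms] walk_iff_is_walk k_def by metis
  ultimately have "\<not> inj_on p {..k}" using card_image by fastforce
  then obtain i j where ij: "i < j" "j \<le> k" "p i = p j"
    unfolding inj_on_def by (metis atMost_iff linorder_neqE_nat order.strict_trans1 order_less_imp_le)
  have "walk n S u (p i) i" "walk n S (p j) v (k - j)"
    using walk_subwalk[OF p(3), of 0 i] walk_subwalk[OF p(3), of j k] p ij by auto
  then have "walk n S u v (i + (k - j))" using walk_trans ij(3) by metis
  then show False using gdist_le_walk[of n S u v] ij k_def by fastforce
qed

lemma gdist_le_square: "gdist n S u v \<le> n\<^sup>2"
proof (cases "reachable n S u v")
  case True
  then have "gdist n S u v \<le> n - 1" by (rule gdist_le_card)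
  also have "n - 1 \<le> n\<^sup>2" by (simp add: power2_eq_square) (metis diff_le_self le_trans le_square)
  finally show ?thesis .
qed (simp add: gdist_unreachable)

lemma card_swap_elem:
  assumes "finite A" "y \<in> A" "w \<notin> A"
  shows "card (insert w (A - {y})) = card A"
  using assms card_Suc_Diff1[OF assms(1,2)] by simp

lemma reachable_swap_arc:
  assumes "reachable n (del_arc S x y) x y" "S x - {y} \<subseteq> T" "reachable n S u v"
  shows "reachable n (S(x := T)) u v"
proof (rule reachable_if_adj_reachable[OF _ assms(3)])
  have del_to_swap: "reachable n (S(x := T)) a b" if "reachable n (del_arc S x y) a b" for a b
    using reachable_if_adj_reachable[OF _ that] adj_del_arc_mono assms(2) reachable_adj by blast
  fix a b assume ab: "a < n" "b < n" "adj S a b"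
  show "reachable n (S(x := T)) a b"
  proof (cases "(a = x \<and> b = y) \<or> (a = y \<and> b = x)")
    case True
    then show ?thesis using del_to_swap[OF assms(1)] reachable_sym by blast
  next
    case False
    then show ?thesis using adj_fun_upd[OF ab(3) _ _ assms(2)] reachable_adj ab by blast
  qed
qed

section \<open>Spanning forests\<close>

locale arc_graph =
  fixes n :: nat and S :: "nat \<Rightarrow> nat set"
  assumes heads_less: "\<And>i. i < n \<Longrightarrow> S i \<subseteq> {..<n}"
begin

definition arcs :: "(nat \<times> nat) set" where "arcs = Sigma {..<n} S"

lemma finite_heads: "i < n \<Longrightarrow> finite (S i)"
  using heads_less finite_subset by blast

lemma card_arcs: "card arcs = (\<Sum>i<n. card (S i))"
  unfolding arcs_def by (rule card_SigmaI) (auto simp: finite_heads)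

text \<open>The least vertex of each component serves as its root; \<open>parent\<close> and \<open>tree_arc\<close>
  describe a breadth-first spanning forest, each non-root owning the arc to its parent.\<close>

definition root :: "nat \<Rightarrow> nat" where "root z = (LEAST r. reachable n S z r)"

definition height :: "nat \<Rightarrow> nat" where "height z = gdist n S (root z) z"

definition non_roots :: "nat set" where "non_roots = {z. z < n \<and> root z \<noteq> z}"

lemma reachable_root: "z < n \<Longrightarrow> reachable n S z (root z)"
  unfolding root_def using reachable_refl by (rule LeastI)

lemma root_le: "z < n \<Longrightarrow> root z \<le> z"
  unfolding root_def using reachable_refl by (rule Least_le)

lemma root_eq:
  assumes "reachable n S a b" shows "root a = root b"
proof -
  have "(\<lambda>r. reachable n S a r) = (\<lambda>r. reachable n S b r)"
    using assms reachable_trans reachable_sym by (intro ext) blast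
  then show ?thesis unfolding root_def by simp
qed

lemma root_root: "z < n \<Longrightarrow> root (root z) = root z"
  using reachable_root root_eq by metis

lemma ex_parent:
  assumes z: "z \<in> non_roots"
  shows "\<exists>q. q < n \<and> adj S q z \<and> root q = root z \<and> height q < height z"
proof -
  have zn: "z < n" and r: "reachable n S (root z) z"
    using z reachable_root reachable_sym unfolding non_roots_def by auto
  define k where "k = height z"
  obtain p where p: "p 0 = root z" "p k = z" "is_walk n S p k"
    using walk_gdist[OF r] walk_iff_is_walk k_def height_def by metis
  have "k \<noteq> 0" using gdist_eq_0D[OF r] z k_def height_def non_roots_def by auto
  define q where "q = p (k - 1)"
  have "Suc (k - 1) = k" using \<open>k \<noteq> 0\<close> by simp
  then have qn: "q < n" and aq: "adj S q z"
    using p \<open>k \<noteq> 0\<close> unfolding is_walk_def q_def by (auto dest: spec[of _ "k - 1"])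
  have rq: "root q = root z" using root_eq reachable_adj[OF qn zn aq] by blast
  have "walk n S (root z) q (k - 1)" using walk_subwalk[OF p(3), of 0 "k - 1"] p(1) q_def by simp
  then have "height q \<le> k - 1" using gdist_le_walk rq height_def by metis
  then have "height q < height z" using \<open>k \<noteq> 0\<close> k_def by linarith
  then show ?thesis using qn aq rq by blast
qed

definition parent :: "nat \<Rightarrow> nat" where
  "parent z = (SOME q. q < n \<and> adj S q z \<and> root q = root z \<and> height q < height z)"

lemma parent:
  "z \<in> non_roots \<Longrightarrow>
    parent z < n \<and> adj S (parent z) z \<and> root (parent z) = root z \<and> height (parent z) < height z"
  unfolding parent_def using ex_parent by (rule someI_ex)

definition tree_arc :: "nat \<Rightarrow> nat \<times> nat" where
  "tree_arc z = (if parent z \<in> S z then (z, parent z) else (parent z, z))"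

lemma tree_arc_in_arcs: "z \<in> non_roots \<Longrightarrow> tree_arc z \<in> arcs"
  using parent[of z] unfolding non_roots_def tree_arc_def arcs_def adj_def by auto

lemma inj_on_tree_arc: "inj_on tree_arc non_roots"
proof
  fix a c assume a: "a \<in> non_roots" and c: "c \<in> non_roots" and e: "tree_arc a = tree_arc c"
  show "a = c"
  proof (rule ccontr)
    assume "a \<noteq> c"
    then have "a = parent c \<and> c = parent a" using e unfolding tree_arc_def by (auto split: if_splits)
    then show False using parent[OF a] parent[OF c] by (metis less_asym)
  qed
qed

lemma card_non_roots_le: "card non_roots \<le> card arcs"
proof -
  have "finite arcs" unfolding arcs_def using finite_heads by auto
  then show ?thesis using card_inj_on_le[OF inj_on_tree_arc] tree_arc_in_arcs by blast
qed

lemma reachable_del_arc_root: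
  assumes "(x, y) \<notin> tree_arc ` non_roots" "z < n"
  shows "reachable n (del_arc S x y) z (root z)"
  using assms(2)
proof (induction "height z" arbitrary: z rule: less_induct)
  case less
  show ?case
  proof (cases "z \<in> non_roots")
    case False then show ?thesis using reachable_refl less.prems unfolding non_roots_def by auto
  next
    case True
    note pz = parent[OF True]
    have ne: "tree_arc z \<noteq> (x, y)" using assms(1) True by force
    have "adj (del_arc S x y) z (parent z)"
    proof (cases "parent z \<in> S z")
      case True
      then show ?thesis using ne unfolding tree_arc_def adj_def by auto
    next
      case False
      then have "z \<in> S (parent z)" using pz unfolding adj_def by blast
      then show ?thesis using ne False unfolding tree_arc_def adj_def by auto
    qed
    then have "reachable n (del_arc S x y) z (parent z)" using reachable_adj pz less.prems by blast
    moreover have "reachable n (del_arc S x y) (parent z) (root (parent z))"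
      using less.hyps pz by blast
    ultimately show ?thesis using pz reachable_trans by metis
  qed
qed

lemma reachable_del_non_tree_arc:
  assumes "(x, y) \<in> arcs" "(x, y) \<notin> tree_arc ` non_roots"
  shows "reachable n (del_arc S x y) x y"
proof -
  have xy: "x < n" "y < n" "y \<in> S x" using assms heads_less unfolding arcs_def by auto
  have "adj S x y" using xy(3) unfolding adj_def by simp
  then have "root x = root y" using root_eq reachable_adj xy(1,2) by blast
  moreover have "reachable n (del_arc S x y) x (root x)" "reachable n (del_arc S x y) y (root y)"
    using reachable_del_arc_root[OF assms(2)] xy by auto
  ultimately show ?thesis using reachable_sym reachable_trans by metis
qed

lemma card_arcs_ge_if_connected:
  assumes "\<And>u v. u < n \<Longrightarrow> v < n \<Longrightarrow> reachable n S u v"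
  shows "n - 1 \<le> card arcs"
proof -
  have "root z = 0" if "z < n" for z
  proof -
    have "root z = root 0" using root_eq assms that by simp
    then show ?thesis using root_le[of 0] that by simp
  qed
  then have "non_roots = {..<n} - {0}" unfolding non_roots_def by auto
  then show ?thesis using card_non_roots_le by (cases "n = 0") auto
qed

lemma ex_non_tree_arc_if_disconnected:
  assumes "card arcs = n - 1" "u < n" "v < n" "\<not> reachable n S u v"
  shows "\<exists>x y. (x, y) \<in> arcs \<and> reachable n (del_arc S x y) x y"
proof -
  have roots_ne: "root u \<noteq> root v"
  proof
    assume "root u = root v"
    then have "reachable n S u (root v)" "reachable n S (root v) v"
      using reachable_root[OF assms(2)] reachable_root[OF assms(3)] reachable_sym by auto
    then show False using assms(4) reachable_trans by blast
  qed
  have roots_less: "root u < n" "root v < n" using assms(2,3) root_le by (meson le_less_trans)+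
  have "non_roots \<subseteq> {..<n} - {root u, root v}"
    unfolding non_roots_def using root_root assms(2,3) by auto
  then have "card non_roots \<le> n - 2"
    using card_mono[of "{..<n} - {root u, root v}" non_roots] roots_ne roots_less
    by (simp add: card_Diff_subset)
  moreover have "finite non_roots" unfolding non_roots_def by simp
  ultimately have "card (tree_arc ` non_roots) < card arcs"
    using card_image_le[of non_roots tree_arc] assms(1) roots_ne roots_less by linarith
  then have "\<not> arcs \<subseteq> tree_arc ` non_roots"
    using card_mono \<open>finite non_roots\<close> by (meson finite_imageI leD)
  then obtain x y where "(x, y) \<in> arcs" "(x, y) \<notin> tree_arc ` non_roots" by auto
  then show ?thesis using reachable_del_non_tree_arc by blast
qed

end

section \<open>Equilibria are trees\<close>

lemma sum_equilibrium_heads: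
  "sum_equilibrium n b S \<Longrightarrow> i < n \<Longrightarrow> S i \<subseteq> {..<n} - {i} \<and> card (S i) = b i"
  unfolding sum_equilibrium_def valid_profile_def by auto

lemma sum_equilibrium_arc_graph: "sum_equilibrium n b S \<Longrightarrow> arc_graph n S"
  using sum_equilibrium_heads by unfold_locales blast

lemma sum_equilibrium_swap:
  assumes eq: "sum_equilibrium n b S" and "x < n" "y \<in> S x" "w < n" "w \<noteq> x" "w \<notin> S x"
  shows "sum_cost n S x \<le> sum_cost n (S(x := insert w (S x - {y}))) x"
proof -
  have "finite (S x)" using arc_graph.finite_heads[OF sum_equilibrium_arc_graph[OF eq]] assms by blast
  then have "card (insert w (S x - {y})) = b x"
    using card_swap_elem sum_equilibrium_heads[OF eq] assms by metis
  moreover have "insert w (S x - {y}) \<subseteq> {..<n} - {x}" using sum_equilibrium_heads[OF eq] assms by auto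
  ultimately show ?thesis using eq assms(2) unfolding sum_equilibrium_def by blast
qed

text \<open>A vertex that keeps everything it reached and gains a neighbour in another component
  saves \<open>n\<^sup>2 - 1\<close> on that vertex and loses at most \<open>n - 2\<close> on each other one.\<close>

lemma sum_cost_less_if_joins_component:
  assumes n: "n \<ge> 2" and x: "x < n" and w: "w < n" "\<not> reachable n S x w" "adj S' x w"
    and keep: "\<And>v. reachable n S x v \<Longrightarrow> reachable n S' x v"
  shows "sum_cost n S' x < sum_cost n S x"
proof -
  have each: "gdist n S' x v \<le> gdist n S x v + (n - 2)" if "v < n" for v
  proof (cases "reachable n S x v")
    case True
    then have "gdist n S' x v \<le> n - 1" using keep gdist_le_card by blast
    moreover have "gdist n S x v \<ge> 1" if "v \<noteq> x" using gdist_eq_0D[OF True] that by fastforce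
    ultimately show ?thesis using gdist_self[OF x, of S'] by (cases "v = x") auto
  next
    case False
    then show ?thesis using gdist_unreachable gdist_le_square[of n S' x v] by simp
  qed
  have "gdist n S' x w \<le> 1" using gdist_adj x w by blast
  moreover have "gdist n S x w = n\<^sup>2" using gdist_unreachable w(2) .
  moreover have "(\<Sum>v\<in>{..<n} - {w}. gdist n S' x v) \<le> (\<Sum>v\<in>{..<n} - {w}. gdist n S x v + (n - 2))"
    using each by (intro sum_mono) auto
  moreover have "(\<Sum>v\<in>{..<n} - {w}. gdist n S x v + (n - 2))
      = (\<Sum>v\<in>{..<n} - {w}. gdist n S x v) + (n - 1) * (n - 2)"
    using w(1) sum.distrib[of "gdist n S x" "\<lambda>_. n - 2" "{..<n} - {w}"] by (simp add: card_Diff_singleton)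
  moreover have "1 + (n - 1) * (n - 2) < n\<^sup>2"
    using n by (cases n) (auto simp: power2_eq_square algebra_simps)
  ultimately show ?thesis unfolding sum_cost_def using w(1) by (simp add: sum.remove)
qed

lemma sum_equilibrium_connected:
  assumes eq: "sum_equilibrium n b S" and n: "n \<ge> 2" and budget: "(\<Sum>i<n. b i) = n - 1"
    and uv: "u < n" "v < n"
  shows "reachable n S u v"
proof (rule ccontr)
  assume nr: "\<not> reachable n S u v"
  interpret arc_graph n S using sum_equilibrium_arc_graph[OF eq] .
  have "card arcs = n - 1" using card_arcs budget sum_equilibrium_heads[OF eq] by simp
  then obtain x y where xy: "(x, y) \<in> arcs" "reachable n (del_arc S x y) x y"
    using ex_non_tree_arc_if_disconnected uv nr by blast
  then have x: "x < n" "y \<in> S x" unfolding arcs_def by auto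
  obtain w where w: "w < n" "\<not> reachable n S x w"
  proof (cases "reachable n S x u")
    case True
    then show ?thesis using that uv(2) nr reachable_sym reachable_trans by metis
  qed (use that uv(1) in blast)
  have "y < n" using x heads_less by auto
  then have "w \<noteq> x" "w \<notin> S x" using x w reachable_refl reachable_adj unfolding adj_def by auto
  define S' where "S' = S(x := insert w (S x - {y}))"
  have "sum_cost n S x \<le> sum_cost n S' x"
    unfolding S'_def using sum_equilibrium_swap[OF eq x w(1)] \<open>w \<noteq> x\<close> \<open>w \<notin> S x\<close> by blast
  moreover have "sum_cost n S' x < sum_cost n S x"
  proof (rule sum_cost_less_if_joins_component[OF n x(1) w])
    show "adj S' x w" unfolding S'_def adj_def by simp
    show "reachable n S' x v" if "reachable n S x v" for v
      using reachable_swap_arc[OF xy(2) _ that] unfolding S'_def by blast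
  qed
  ultimately show False by simp
qed

text \<open>Deleting a non-bridge would leave a connected graph with only \<open>n - 2\<close> arcs.\<close>

lemma sum_equilibrium_bridge:
  assumes eq: "sum_equilibrium n b S" and n: "n \<ge> 2" and budget: "(\<Sum>i<n. b i) = n - 1"
    and x: "x < n" "y \<in> S x"
  shows "\<not> reachable n (del_arc S x y) x y"
proof
  assume reach_xy: "reachable n (del_arc S x y) x y"
  have heads: "S i \<subseteq> {..<n} - {i}" "card (S i) = b i" if "i < n" for i
    using sum_equilibrium_heads[OF eq that] by auto
  interpret arc_graph n "del_arc S x y" using heads by unfold_locales auto
  have "n - 1 \<le> card arcs"
    using card_arcs_ge_if_connected sum_equilibrium_connected[OF eq n budget]
      reachable_swap_arc[OF reach_xy subset_refl] by fastforce
  moreover have "card (S x) = card (del_arc S x y x) + 1"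
    using x finite_heads[OF x(1)] card_Suc_Diff1[of "S x" y] by auto
  moreover have "(\<Sum>i<n. card (S i)) = card (S x) + (\<Sum>i\<in>{..<n} - {x}. card (S i))"
    "card arcs = card (del_arc S x y x) + (\<Sum>i\<in>{..<n} - {x}. card (S i))"
    using x by (simp_all add: card_arcs sum.remove)
  ultimately show False using heads budget n by simp
qed

section \<open>Sides of an edge in a tree\<close>

locale tree_profile =
  fixes n :: nat and S :: "nat \<Rightarrow> nat set"
  assumes heads: "\<And>i. i < n \<Longrightarrow> S i \<subseteq> {..<n} - {i}"
    and connected: "\<And>u v. u < n \<Longrightarrow> v < n \<Longrightarrow> reachable n S u v"
    and bridge: "\<And>x y. x < n \<Longrightarrow> y \<in> S x \<Longrightarrow> \<not> reachable n (del_arc S x y) x y"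
begin

abbreviation d :: "nat \<Rightarrow> nat \<Rightarrow> nat" where "d \<equiv> gdist n S"

text \<open>For an edge \<open>ac\<close>, \<open>side a c\<close> is the component of \<open>c\<close> once the edge is removed.\<close>

definition side :: "nat \<Rightarrow> nat \<Rightarrow> nat set" where
  "side a c = {z. z < n \<and> d c z < d a z}"

lemma d_triangle: "u < n \<Longrightarrow> v < n \<Longrightarrow> w < n \<Longrightarrow> d u w \<le> d u v + d v w"
  using gdist_triangle connected by blast

lemma d_pos: "u < n \<Longrightarrow> v < n \<Longrightarrow> u \<noteq> v \<Longrightarrow> d u v \<ge> 1"
  using gdist_eq_0D connected by (metis less_one not_le)

lemma d_along_shortest_walk:
  assumes "is_walk n S p k" "j \<le> k" "k = d (p 0) (p k)"
  shows "d (p 0) (p j) + d (p j) (p k) \<le> k"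
proof -
  have "d (p 0) (p j) \<le> j" "d (p j) (p k) \<le> k - j"
    using gdist_le_walk walk_subwalk[OF assms(1)] assms(2) by (metis diff_zero le0, metis order_refl)
  then show ?thesis using assms(2) by linarith
qed

text \<open>A shortest walk from outside the component of \<open>y\<close> in the graph without \<open>xy\<close>
  into that component has to cross via \<open>x\<close> and \<open>y\<close>.\<close>

lemma d_across_bridge:
  assumes x: "x < n" "y \<in> S x"
    and a: "a < n" "\<not> reachable n (del_arc S x y) y a"
    and z: "reachable n (del_arc S x y) y z"
  shows "d a z \<ge> d a x + 1 + d y z"
proof -
  define B where "B = {z. reachable n (del_arc S x y) y z}"
  have zn: "z < n" using z reachable_less by blast
  have crossing: "e = x \<and> c = y" if "c \<in> B" "e < n" "e \<notin> B" "adj S e c" for c e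
  proof (rule ccontr)
    assume ne: "\<not> (e = x \<and> c = y)"
    have cn: "c < n" using that(1) B_def reachable_less by blast
    have "e = y \<and> c = x \<Longrightarrow> False"
      using that(1) bridge[OF x] reachable_sym B_def by blast
    then have "adj (del_arc S x y) e c" using adj_fun_upd[OF that(4) ne] by blast
    then have "reachable n (del_arc S x y) c e" using reachable_adj[OF cn that(2)] adj_sym by blast
    then show False using that(1,3) B_def reachable_trans by blast
  qed
  define k where "k = d a z"
  obtain p where p: "p 0 = a" "p k = z" "is_walk n S p k"
    using walk_gdist[OF connected[OF a(1) zn]] walk_iff_is_walk k_def by metis
  have aB: "a \<notin> B" and zB: "z \<in> B" using a z B_def by auto
  then have "k \<noteq> 0" using p by (metis bot_nat_0.not_eq_extremum)
  then have ex: "\<exists>i. p (Suc i) \<in> B" using p(2) zB by (metis Suc_pred' neq0_conv)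
  define i where "i = (LEAST i. p (Suc i) \<in> B)"
  have iB: "p (Suc i) \<in> B" unfolding i_def using ex by (rule LeastI_ex)
  have ik: "i < k"
    using Least_le[of "\<lambda>i. p (Suc i) \<in> B" "k - 1"] p(2) zB \<open>k \<noteq> 0\<close> unfolding i_def by simp
  have piB: "p i \<notin> B"
  proof (cases i)
    case (Suc j)
    then show ?thesis using not_less_Least[of j "\<lambda>i. p (Suc i) \<in> B"] i_def by auto
  qed (use p aB in simp)
  have "p i = x \<and> p (Suc i) = y"
    using crossing[OF iB _ piB] p(3) ik unfolding is_walk_def by auto
  moreover have "walk n S a (p i) i" "walk n S (p (Suc i)) z (k - Suc i)"
    using walk_subwalk[OF p(3), of 0 i] walk_subwalk[OF p(3), of "Suc i" k] ik p by auto
  ultimately have "d a x \<le> i" "d y z \<le> k - Suc i" using gdist_le_walk by auto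
  then show ?thesis using ik k_def by linarith
qed

lemma side_arc:
  assumes x: "x < n" "y \<in> S x" and z: "z < n"
  shows "z \<in> side x y \<longleftrightarrow> reachable n (del_arc S x y) y z"
    and "z \<notin> side x y \<Longrightarrow> z \<in> side y x"
proof -
  have yn: "y < n" using x heads by auto
  have ry: "reachable n (del_arc S x y) y y" using reachable_refl yn by blast
  have nx: "\<not> reachable n (del_arc S x y) y x" using bridge[OF x] reachable_sym by blast
  have "(z \<in> side x y \<longleftrightarrow> reachable n (del_arc S x y) y z) \<and> (z \<notin> side x y \<longrightarrow> z \<in> side y x)"
  proof (cases "reachable n (del_arc S x y) y z")
    case True
    have "d x z \<ge> d x x + 1 + d y z" using d_across_bridge[OF x x(1) nx True] .
    then show ?thesis using True z gdist_self[OF x(1)] unfolding side_def by auto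
  next
    case False
    have "d z y \<ge> d z x + 1 + d y y" using d_across_bridge[OF x z False ry] .
    then have "d y z > d x z" using gdist_sym[of n S z y] gdist_sym[of n S z x] by simp
    then show ?thesis using False z unfolding side_def by auto
  qed
  then show "z \<in> side x y \<longleftrightarrow> reachable n (del_arc S x y) y z" "z \<notin> side x y \<Longrightarrow> z \<in> side y x"
    by blast+
qed

lemma side_disjoint: "z \<in> side a c \<Longrightarrow> z \<notin> side c a"
  unfolding side_def by auto

lemma d_across_side_arc:
  assumes x: "x < n" "y \<in> S x" and u: "u < n" "u \<notin> side x y" and z: "z \<in> side x y"
  shows "d u z \<ge> d u x + 1 + d y z"
proof -
  have "z < n" using z side_def by auto
  then show ?thesis using d_across_bridge[OF x u(1)] side_arc[OF x] u z by blast
qed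

lemma d_across_side:
  assumes ac: "adj S a c" "a < n" "c < n" and u: "u < n" "u \<notin> side a c" and z: "z \<in> side a c"
  shows "d u z \<ge> d u a + 1 + d c z"
proof (cases "c \<in> S a")
  case True show ?thesis using d_across_side_arc[OF ac(2) True u z] .
next
  case False
  then have aS: "a \<in> S c" using ac unfolding adj_def by auto
  have zn: "z < n" using z side_def by auto
  have "z \<notin> side c a" using z side_disjoint by blast
  moreover have "u \<in> side c a" using side_arc(2)[OF ac(3) aS u(1)] u(2) side_disjoint by blast
  ultimately have "d z u \<ge> d z c + 1 + d a u" using d_across_side_arc[OF ac(3) aS zn] by blast
  then show ?thesis using gdist_sym[of n S z u] gdist_sym[of n S z c] gdist_sym[of n S a u] by simp
qed

lemma side_cases:
  assumes ac: "adj S a c" "a < n" "c < n" and z: "z < n"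
  shows "z \<in> side a c \<or> z \<in> side c a"
proof (cases "c \<in> S a")
  case True then show ?thesis using side_arc(2)[OF ac(2) True z] by blast
next
  case False
  then have "a \<in> S c" using ac unfolding adj_def by auto
  then show ?thesis using side_arc(2)[OF ac(3) _ z] by blast
qed

lemma d_side:
  assumes ac: "adj S a c" "a < n" "c < n" and z: "z \<in> side a c"
  shows "d a z = 1 + d c z"
proof -
  have "a \<notin> side a c" unfolding side_def using gdist_self[OF ac(2)] by auto
  then have "d a z \<ge> d a a + 1 + d c z" using d_across_side[OF ac ac(2) _ z] by blast
  moreover have "d a z \<le> d a c + d c z" using d_triangle ac z side_def by auto
  moreover have "d a c \<le> 1" using gdist_adj ac by blast
  ultimately show ?thesis using gdist_self[OF ac(2)] by linarith
qed

lemma finite_side: "finite (side a c)"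
  unfolding side_def by auto

end

section \<open>The median property of equilibria\<close>

locale equilibrium_tree = tree_profile +
  assumes swap_stable: "\<And>x y w. x < n \<Longrightarrow> y \<in> S x \<Longrightarrow> w < n \<Longrightarrow> w \<noteq> x \<Longrightarrow> w \<notin> S x \<Longrightarrow>
    sum_cost n S x \<le> sum_cost n (S(x := insert w (S x - {y}))) x"
begin

context
  fixes x y w
  assumes x: "x < n" "y \<in> S x" and w: "w \<in> side x y" "w \<noteq> y"
begin

definition swapped :: "nat \<Rightarrow> nat set" where "swapped = S(x := insert w (S x - {y}))"

lemma y_less: "y < n" and adj_xy: "adj S x y" and y_in_side: "y \<in> side x y"
proof -
  show yn: "y < n" using x heads by auto
  show "adj S x y" using x adj_def by auto
  then have "d x y = 1" using gdist_adj[OF x(1) yn] d_pos[OF x(1) yn] x(2) heads[OF x(1)] by fastforce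
  then show "y \<in> side x y" unfolding side_def using gdist_self[OF yn] yn by auto
qed

lemma w_less: "w < n"
  using w side_def by auto

lemma x_notin_side: "x \<notin> side x y"
  unfolding side_def using gdist_self[OF x(1)] by auto

lemma d_x_w: "d x w = 1 + d y w"
  using d_side[OF adj_xy x(1) y_less w(1)] .

lemma d_swapped_outside:
  assumes z: "z < n" "z \<notin> side x y"
  shows "gdist n swapped x z \<le> d x z"
proof -
  define k where "k = d x z"
  obtain p where p: "p 0 = x" "p k = z" "is_walk n S p k"
    using walk_gdist[OF connected[OF x(1) z(1)]] walk_iff_is_walk k_def by metis
  have "\<forall>j\<le>k. p j \<noteq> y"
  proof (intro allI impI notI)
    fix j assume j: "j \<le> k" "p j = y"
    have "d x y + d y z \<le> k" using d_along_shortest_walk[OF p(3) j(1)] p j k_def by simp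
    moreover have "d z y \<ge> d z x + 1 + d y y"
      using d_across_side[OF adj_xy x(1) y_less z y_in_side] .
    ultimately show False using gdist_sym[of n S z y] gdist_sym[of n S z x] k_def by simp
  qed
  then have "is_walk n swapped p k"
    unfolding swapped_def by (rule is_walk_fun_upd_avoid[OF p(3)]) auto
  then have "walk n swapped x z k" using p walk_iff_is_walk by blast
  then show ?thesis using gdist_le_walk k_def by blast
qed

lemma d_swapped_inside:
  assumes z: "z \<in> side x y"
  shows "gdist n swapped x z \<le> 1 + d w z"
proof -
  have zn: "z < n" using z side_def by auto
  define k where "k = d w z"
  obtain p where p: "p 0 = w" "p k = z" "is_walk n S p k"
    using walk_gdist[OF connected[OF w_less zn]] walk_iff_is_walk k_def by metis
  have "\<forall>j\<le>k. p j \<noteq> x"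
  proof (intro allI impI notI)
    fix j assume j: "j \<le> k" "p j = x"
    have "d w x + d x z \<le> k" using d_along_shortest_walk[OF p(3) j(1)] p j k_def by simp
    moreover have "d x z = 1 + d y z" using d_side[OF adj_xy x(1) y_less z] .
    moreover have "d w z \<le> d w y + d y z" using d_triangle w_less y_less zn by blast
    ultimately show False using d_x_w gdist_sym[of n S w x] gdist_sym[of n S w y] k_def by simp
  qed
  then have "is_walk n swapped p k"
    unfolding swapped_def by (rule is_walk_fun_upd_avoid[OF p(3)]) auto
  then have "walk n swapped w z k" using p walk_iff_is_walk by blast
  moreover have "walk n swapped x w 1"
    using walk_adj[OF x(1) w_less] unfolding swapped_def adj_def by simp
  ultimately show ?thesis using walk_trans gdist_le_walk k_def by (metis add.commute)
qed

text \<open>Buying \<open>xw\<close> instead of \<open>xy\<close> changes \<open>x\<close>'s distances only inside \<open>side x y\<close>,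
  where \<open>d x z = 1 + d y z\<close> becomes at most \<open>1 + d w z\<close>.\<close>

lemma sum_d_side_le: "(\<Sum>z\<in>side x y. d y z) \<le> (\<Sum>z\<in>side x y. d w z)"
proof -
  define B where "B = side x y"
  have Bn: "{..<n} \<inter> B = B" unfolding B_def side_def by auto
  have "w \<notin> S x"
  proof
    assume "w \<in> S x"
    then have "d x w \<le> 1" using gdist_adj[OF x(1) w_less] unfolding adj_def by blast
    then show False using d_x_w d_pos[OF y_less w_less] w(2) by simp
  qed
  moreover have "w \<noteq> x" using x_notin_side w(1) by auto
  ultimately have "sum_cost n S x \<le> sum_cost n swapped x"
    unfolding swapped_def using swap_stable[OF x w_less] by blast
  also have "\<dots> \<le> (\<Sum>z<n. if z \<in> B then 1 + d w z else d x z)"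
    unfolding sum_cost_def B_def using d_swapped_outside d_swapped_inside by (intro sum_mono) auto
  finally have "sum_cost n S x \<le> (\<Sum>z<n. if z \<in> B then 1 + d w z else d x z)" .
  moreover have "sum_cost n S x = (\<Sum>z<n. if z \<in> B then 1 + d y z else d x z)"
    unfolding sum_cost_def B_def using d_side[OF adj_xy x(1) y_less] by (intro sum.cong) auto
  ultimately have "(\<Sum>z<n. if z \<in> B then 1 + d y z else d x z) \<le> (\<Sum>z<n. if z \<in> B then 1 + d w z else d x z)"
    by simp
  then have "(\<Sum>z\<in>B. 1 + d y z) \<le> (\<Sum>z\<in>B. 1 + d w z)"
    by (simp add: sum.If_cases Bn)
  then show ?thesis unfolding B_def by (simp add: sum_Suc)
qed

end

end

definition forward_steps :: "(nat \<Rightarrow> nat set) \<Rightarrow> (nat \<Rightarrow> nat) \<Rightarrow> nat \<Rightarrow> nat set" where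
  "forward_steps S p k = {i. Suc (Suc i) \<le> k \<and> p (Suc i) \<in> S (p i)}"

lemma finite_forward_steps: "finite (forward_steps S p k)"
  unfolding forward_steps_def by (rule finite_subset[of _ "{..<k}"]) auto

lemma steps_subset_forward_steps:
  assumes "is_walk n S p k"
  shows "{..<k} \<subseteq> forward_steps S p k \<union> (\<lambda>i. k - 1 - i) ` forward_steps S (\<lambda>i. p (k - i)) k \<union> {0, k - 1}"
proof
  fix i assume i: "i \<in> {..<k}"
  then have a: "adj S (p i) (p (Suc i))" using assms is_walk_def by auto
  consider "p (Suc i) \<in> S (p i)" | "i = 0" | "p i \<in> S (p (Suc i))" "i \<noteq> 0"
    using a adj_def by auto
  then show "i \<in> forward_steps S p k \<union> (\<lambda>i. k - 1 - i) ` forward_steps S (\<lambda>i. p (k - i)) k \<union> {0, k - 1}"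
  proof cases
    case 1
    then show ?thesis using i unfolding forward_steps_def by (cases "Suc (Suc i) \<le> k") auto
  next
    case 3
    then have "k - 1 - i \<in> forward_steps S (\<lambda>i. p (k - i)) k"
      using i unfolding forward_steps_def by (auto simp: Suc_diff_Suc)
    moreover have "i = k - 1 - (k - 1 - i)" using i by auto
    ultimately show ?thesis by blast
  qed simp
qed

lemma card_steps_le_forward_steps:
  assumes "is_walk n S p k"
  shows "k \<le> card (forward_steps S p k) + card (forward_steps S (\<lambda>i. p (k - i)) k) + 2"
proof -
  let ?F = "forward_steps S p k" and ?G = "forward_steps S (\<lambda>i. p (k - i)) k"
  have "k = card {..<k}" by simp
  also have "\<dots> \<le> card (?F \<union> (\<lambda>i. k - 1 - i) ` ?G \<union> {0, k - 1})"
    using steps_subset_forward_steps[OF assms] finite_forward_steps by (intro card_mono) auto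
  also have "\<dots> \<le> card ?F + card ((\<lambda>i. k - 1 - i) ` ?G) + card {0, k - 1}"
    by (meson card_Un_le add_le_mono1 le_trans)
  also have "\<dots> \<le> card ?F + card ?G + 2"
  proof -
    have "card {0, k - 1} \<le> 2" by (cases "k - 1 = 0") auto
    then show ?thesis
      using card_image_le[OF finite_forward_steps[of S "\<lambda>i. p (k - i)" k], of "\<lambda>i. k - 1 - i"] by linarith
  qed
  finally show ?thesis .
qed

context equilibrium_tree
begin

context
  fixes p :: "nat \<Rightarrow> nat" and D :: nat
  assumes walk: "is_walk n S p D" and shortest: "D = d (p 0) (p D)"
begin

lemma path_less: "i \<le> D \<Longrightarrow> p i < n"
  using walk is_walk_def by auto

lemma path_adj: "i < D \<Longrightarrow> adj S (p i) (p (Suc i))"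
  using walk is_walk_def by auto

lemma d_path: "i \<le> j \<Longrightarrow> j \<le> D \<Longrightarrow> d (p i) (p j) = j - i"
proof -
  assume ij: "i \<le> j" "j \<le> D"
  have "d (p i) (p j) \<le> j - i" using gdist_le_walk walk_subwalk[OF walk ij] by blast
  moreover have "d (p 0) (p i) \<le> i" using gdist_le_walk walk_subwalk[OF walk, of 0 i] ij by fastforce
  moreover have "d (p j) (p D) \<le> D - j" using gdist_le_walk walk_subwalk[OF walk, of j D] ij by fastforce
  moreover have "d (p 0) (p j) \<le> d (p 0) (p i) + d (p i) (p j)" using d_triangle path_less ij by simp
  moreover have "d (p 0) (p D) \<le> d (p 0) (p j) + d (p j) (p D)" using d_triangle path_less ij by simp
  ultimately show ?thesis using shortest ij by linarith
qed

lemma path_end_in_side: "i < D \<Longrightarrow> p D \<in> side (p i) (p (Suc i))"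
  using d_path path_less unfolding side_def by auto

lemma side_path_mono:
  assumes i: "Suc (Suc i) \<le> D"
  shows "side (p (Suc i)) (p (Suc (Suc i))) \<subseteq> side (p i) (p (Suc i))"
proof
  fix z assume z: "z \<in> side (p (Suc i)) (p (Suc (Suc i)))"
  define a b c where "a = p i" and "b = p (Suc i)" and "c = p (Suc (Suc i))"
  have n: "a < n" "b < n" "c < n" and zn: "z < n"
    using path_less i z side_def unfolding a_def b_def c_def by auto
  have ab: "adj S a b" using path_adj i a_def b_def by auto
  have dab: "d a b = 1" "d b c = 1" "d a c = 2" using d_path i a_def b_def c_def by auto
  have c_side: "c \<in> side a b" using dab n unfolding side_def by auto
  show "z \<in> side (p i) (p (Suc i))"
  proof (rule ccontr)
    assume "z \<notin> side (p i) (p (Suc i))"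
    then have "d z c \<ge> d z a + 1 + d b c" using d_across_side[OF ab n(1,2) zn _ c_side] a_def b_def by blast
    moreover have "d c z < d b z" using z b_def c_def side_def by auto
    moreover have "d b z \<le> d b a + d a z" using d_triangle n zn by blast
    ultimately show False using dab gdist_sym[of n S z c] gdist_sym[of n S z a] gdist_sym[of n S b a] by linarith
  qed
qed

text \<open>Apply \<open>sum_d_side_le\<close> with \<open>w = p (i + 2)\<close>: passing from \<open>y\<close> to \<open>w\<close>, distances drop by
  one on \<open>side y w\<close> and rise by one on the rest of \<open>side x y\<close>.\<close>

lemma card_side_path_halves:
  assumes i: "Suc (Suc i) \<le> D" and arc: "p (Suc i) \<in> S (p i)"
  shows "2 * card (side (p (Suc i)) (p (Suc (Suc i)))) \<le> card (side (p i) (p (Suc i)))"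
proof -
  define x y w where "x = p i" and "y = p (Suc i)" and "w = p (Suc (Suc i))"
  define B W where "B = side x y" and "W = side y w"
  have n: "x < n" "y < n" "w < n" using path_less i x_def y_def w_def by auto
  have dd: "d y w = 1" "d x w = 2" using d_path i x_def y_def w_def by auto
  have wB: "w \<in> side x y" using dd n unfolding side_def by auto
  have wy: "w \<noteq> y" using dd gdist_self n by auto
  have med: "(\<Sum>z\<in>B. d y z) \<le> (\<Sum>z\<in>B. d w z)"
    using sum_d_side_le[OF n(1) _ wB wy] arc x_def y_def B_def by auto
  have WB: "W \<subseteq> B" using side_path_mono[OF i] W_def B_def x_def y_def w_def by auto
  have yw: "adj S y w" using path_adj i y_def w_def by auto
  have in_W: "d y z = Suc (d w z)" if "z \<in> W" for z
    using d_side[OF yw n(2,3)] that W_def by auto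
  have out_W: "d w z = Suc (d y z)" if "z \<in> B - W" for z
  proof -
    have "z < n" using that B_def side_def by auto
    then have "z \<in> side w y" using side_cases[OF yw n(2,3)] that W_def by auto
    then show ?thesis using d_side[OF adj_sym[OF yw] n(3,2)] by auto
  qed
  have fB: "finite B" using B_def finite_side by auto
  have "(\<Sum>z\<in>B. d y z) = (\<Sum>z\<in>B - W. d y z) + (\<Sum>z\<in>W. d w z) + card W"
    using sum.subset_diff[OF WB fB, of "d y"] in_W by (simp add: sum_Suc)
  moreover have "(\<Sum>z\<in>B. d w z) = (\<Sum>z\<in>B - W. d y z) + card (B - W) + (\<Sum>z\<in>W. d w z)"
    using sum.subset_diff[OF WB fB, of "d w"] out_W by (simp add: sum_Suc)
  ultimately have "card W \<le> card (B - W)" using med by linarith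
  moreover have "card (B - W) = card B - card W" using WB fB by (simp add: card_Diff_subset finite_subset)
  moreover have "card W \<le> card B" using WB fB card_mono by blast
  ultimately show ?thesis unfolding B_def W_def x_def y_def w_def by linarith
qed

lemma card_side_path_mult_pow:
  "m < D \<Longrightarrow>
    card (side (p m) (p (Suc m))) * 2 ^ card (forward_steps S p D \<inter> {..<m}) \<le> card (side (p 0) (p 1))"
proof (induction m)
  case (Suc m)
  let ?F = "forward_steps S p D" and ?s = "\<lambda>m. card (side (p m) (p (Suc m)))"
  have step: "?s (Suc m) * 2 ^ card (?F \<inter> {..<Suc m}) \<le> ?s m * 2 ^ card (?F \<inter> {..<m})"
  proof (cases "m \<in> ?F")
    case True
    then have "card (?F \<inter> {..<Suc m}) = Suc (card (?F \<inter> {..<m}))"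
      by (simp add: lessThan_Suc Int_insert_right)
    then show ?thesis using card_side_path_halves[of m] True unfolding forward_steps_def by simp
  next
    case False
    then have "?F \<inter> {..<Suc m} = ?F \<inter> {..<m}" by (auto simp: less_Suc_eq)
    moreover have "?s (Suc m) \<le> ?s m"
      using card_mono[OF finite_side side_path_mono[of m]] Suc.prems by simp
    ultimately show ?thesis by simp
  qed
  then show ?case using Suc by simp
qed simp

lemma two_pow_card_forward_steps_le: "2 ^ card (forward_steps S p D) \<le> n"
proof (cases "D = 0")
  case True
  then show ?thesis using path_less[of 0] unfolding forward_steps_def by simp
next
  case False
  have "forward_steps S p D \<inter> {..<D - 1} = forward_steps S p D" unfolding forward_steps_def by auto
  then have "card (side (p (D - 1)) (p D)) * 2 ^ card (forward_steps S p D) \<le> card (side (p 0) (p 1))"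
    using card_side_path_mult_pow[of "D - 1"] False by simp
  moreover have "card (side (p (D - 1)) (p D)) \<ge> 1"
    using path_end_in_side[of "D - 1"] finite_side False by (simp add: Suc_le_eq card_gt_0_iff, blast)
  moreover have "card (side (p 0) (p 1)) \<le> n"
    using card_mono[of "{..<n}" "side (p 0) (p 1)"] unfolding side_def by auto
  ultimately show ?thesis
    using mult_le_mono1[of 1 "card (side (p (D - 1)) (p D))" "2 ^ card (forward_steps S p D)"] by linarith
qed

end

lemma shortest_walk_length_le_log:
  assumes walk: "is_walk n S p D" and shortest: "D = d (p 0) (p D)" and n: "n \<ge> 2"
  shows "real D \<le> 4 * log 2 (real n)"
proof -
  have "is_walk n S (\<lambda>i. p (D - i)) D" "D = d (p D) (p 0)"
    using is_walk_rev[OF walk] shortest gdist_sym by auto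
  then have "2 ^ card (forward_steps S (\<lambda>i. p (D - i)) D) \<le> n"
    using two_pow_card_forward_steps_le by simp
  moreover have "2 ^ card (forward_steps S p D) \<le> n"
    using two_pow_card_forward_steps_le[OF walk shortest] .
  ultimately have "real (card (forward_steps S p D)) \<le> log 2 n"
    "real (card (forward_steps S (\<lambda>i. p (D - i)) D)) \<le> log 2 n"
    using le_log2_of_power by blast+
  moreover have "1 \<le> log 2 (real n)" using le_log2_of_power[of 1 n] n by simp
  ultimately show ?thesis using card_steps_le_forward_steps[OF walk] by linarith
qed

end

lemma sum_equilibrium_is_tree:
  assumes eq: "sum_equilibrium n b S" and n: "n \<ge> 2" and budget: "(\<Sum>i<n. b i) = n - 1"
  shows "equilibrium_tree n S"
proof
  show "S i \<subseteq> {..<n} - {i}" if "i < n" for i using sum_equilibrium_heads[OF eq that] by blast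
  show "reachable n S u v" if "u < n" "v < n" for u v
    using sum_equilibrium_connected[OF eq n budget that] .
  show "\<not> reachable n (del_arc S x y) x y" if "x < n" "y \<in> S x" for x y
    using sum_equilibrium_bridge[OF eq n budget that] .
  show "sum_cost n S x \<le> sum_cost n (S(x := insert w (S x - {y}))) x"
    if "x < n" "y \<in> S x" "w < n" "w \<noteq> x" "w \<notin> S x" for x y w
    using sum_equilibrium_swap[OF eq that] .
qed

lemma diameter_attained:
  assumes "n > 0" shows "\<exists>u<n. \<exists>v<n. diameter n S = gdist n S u v"
proof -
  have "{gdist n S u v | u v. u < n \<and> v < n} = (\<lambda>(u, v). gdist n S u v) ` ({..<n} \<times> {..<n})" by auto
  then have "finite {gdist n S u v | u v. u < n \<and> v < n}" "{gdist n S u v | u v. u < n \<and> v < n} \<noteq> {}"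
    using assms by auto
  then show ?thesis using Max_in unfolding diameter_def by fastforce
qed

theorem mainTheorem4:
  shows "\<exists>C::real. C > 0 \<and>
    (\<forall>n::nat. \<forall>b::nat \<Rightarrow> nat. \<forall>S::nat \<Rightarrow> nat set.
       n \<ge> 2 \<longrightarrow> (\<forall>i<n. b i \<le> n - 1) \<longrightarrow> (\<Sum>i<n. b i) = n - 1 \<longrightarrow>
       sum_equilibrium n b S \<longrightarrow>
       real (diameter n S) \<le> C * log 2 (real n))"
proof (intro exI[of _ 4] conjI allI impI)
  fix n b S
  assume n: "n \<ge> (2::nat)" and budget: "(\<Sum>i<n. b i) = n - 1" and eq: "sum_equilibrium n b S"
  interpret equilibrium_tree n S using sum_equilibrium_is_tree[OF eq n budget] .
  obtain u v where uv: "u < n" "v < n" "diameter n S = d u v"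
    using diameter_attained[of n S] n by auto
  then obtain p where "p 0 = u" "p (d u v) = v" "is_walk n S p (d u v)"
    using walk_gdist[OF connected[OF uv(1,2)]] walk_iff_is_walk by metis
  then show "real (diameter n S) \<le> 4 * log 2 (real n)"
    using shortest_walk_length_le_log[of p "d u v"] n uv(3) by simp
qed simp

end
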